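(* Let $\mathcal{T}=(V,A,E,f,q,v_0)$ be a decorated rooted tree such that $f(\alpha)\in\{0,1\}$ for all $\alpha\in A$. Then for every out-pair $(x,e)$ of $\mathcal{T}$, $$p(x,e)=1+\sum_{y\in Y(x,e)}\phi(x,y)(\delta_y-2).$$
   Context: A graph is a pair $(X_0,X_1)$ of finite sets such that each element of $X_1$ (an edge) is a $2$-element subset of $X_0$; elements of $X_0$ are cells. The valency $\delta_x$ of a cell is the number of edges containing it. A path is a tuple $(x_0,\dots,x_n)$ ($n\ge0$) of cells with $\{x_i,x_{i+1}\}$ an edge for each $i<n$, these edges pairwise distinct; a cell/edge is in the path if it is some $x_i$ / some $\{x_i,x_{i+1}\}$. The graph is a tree if any two cells $x,y$ are joined by a unique path $\gamma_{x,y}$. A decorated tree is $(V,A,E,f,q)$ with $V$ (vertices), $A$ (arrows) finite disjoint sets, $(V\cup A,E)$ a tree, every arrow of valency $1$, $f:A\to\mathbb{Z}$, $q(e,x)\in\mathbb{Z}$ for each $e\in E$, $x\in e$, with $q(e,\alpha)=1$ for $\alpha\in A$, and for each $v\in V$ and distinct edges $e,e'\ni v$, $\gcd(q(e,v),q(e',v))=1$. $A_0=\{\alpha\in A:f(\alpha)=0\}$. An edge $\varepsilon$ is incident to a path $\gamma$ if it is not in $\gamma$ but contains a cell $u$ of $\gamma$; $q(\varepsilon,\gamma):=q(\varepsilon,u)$. For $v\ne\alpha$, $v\in V\cup A$, $\alpha\in A$: $\hat x_{v,\alpha}=f(\alpha)\prod_\varepsilon q(\varepsilon,\gamma_{v,\alpha})$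 over edges $\varepsilon$ incident to $\gamma_{v,\alpha}$ and not containing $v$ (empty product $=1$). For $u\in V\cup A$, $e\ni u$: $p(u,e)=\sum\hat x_{u,\alpha}$ over $\alpha\in A\setminus A_0$ with $e$ in $\gamma_{u,\alpha}$. For a path $\gamma=(x_0,\dots,x_n)$, $n\ge1$, $\phi(\gamma)$ is the product of $q(e,u)$ over all pairs with $u\in\{x_1,\dots,x_n\}$ and $e$ an edge containing $u$ not in $\gamma$; for $x\ne y$, $\phi(x,y)=\phi(\gamma_{x,y})$. For $x\in V\cup A$ and an edge $e\ni x$, $Y(x,e)=\{y\in V\cup A_0: e \text{ is in } \gamma_{x,y}\}$. A root of $(V,A,E,f,q)$ is a vertex $v_0$ with $q(e,v_0)=1$ for every edge $e\ni v_0$ such that for every $v\in V\setminus\{v_0\}$, all edges $e\ni v$ not in $\gamma_{v_0,v}$ satisfy $q(e,v)\ge1$ and at most one of them satisfies $q(e,v)\ne1$. A decorated rooted tree is $(V,A,E,f,q,v_0)$ with $v_0$ a root. For distinct $x,y$, $x<y$ means $x$ is in $\gamma_{v_0,y}$. An out-pair is a pair $(x,e)$ with $x\in V\cup A$ and $e=\{x,x'\}$ an edge such that $x<x'$. *)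

theory Defs
  imports Main
begin

definition is_graph :: "'a set \<Rightarrow> 'a set set \<Rightarrow> bool" where
  "is_graph X0 X1 \<longleftrightarrow> finite X0 \<and> finite X1 \<and> (\<forall>e\<in>X1. e \<subseteq> X0 \<and> card e = 2)"

definition valency :: "'a set set \<Rightarrow> 'a \<Rightarrow> nat" where
  "valency X1 x = card {e \<in> X1. x \<in> e}"

definition path_edges :: "'a list \<Rightarrow> 'a set list" where
  "path_edges xs = map (\<lambda>i. {xs ! i, xs ! Suc i}) [0..<length xs - 1]"

definition is_path :: "'a set \<Rightarrow> 'a set set \<Rightarrow> 'a list \<Rightarrow> bool" where
  "is_path X0 X1 xs \<longleftrightarrow> xs \<noteq> [] \<and> set xs \<subseteq> X0 \<and>
     (\<forall>e\<in>set (path_edges xs). e \<in> X1) \<and> distinct (path_edges xs)"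

definition is_tree :: "'a set \<Rightarrow> 'a set set \<Rightarrow> bool" where
  "is_tree X0 X1 \<longleftrightarrow> is_graph X0 X1 \<and>
     (\<forall>x\<in>X0. \<forall>y\<in>X0. \<exists>!xs. is_path X0 X1 xs \<and> hd xs = x \<and> last xs = y)"

definition gpath :: "'a set \<Rightarrow> 'a set set \<Rightarrow> 'a \<Rightarrow> 'a \<Rightarrow> 'a list" where
  "gpath X0 X1 x y = (THE xs. is_path X0 X1 xs \<and> hd xs = x \<and> last xs = y)"

definition decorated_tree ::
  "'a set \<Rightarrow> 'a set \<Rightarrow> 'a set set \<Rightarrow> ('a \<Rightarrow> int) \<Rightarrow> ('a set \<Rightarrow> 'a \<Rightarrow> int) \<Rightarrow> bool" where
  "decorated_tree V A E f q \<longleftrightarrow>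
     finite V \<and> finite A \<and> V \<inter> A = {} \<and> is_tree (V \<union> A) E \<and>
     (\<forall>\<alpha>\<in>A. valency E \<alpha> = 1) \<and>
     (\<forall>e\<in>E. \<forall>\<alpha>\<in>A. \<alpha> \<in> e \<longrightarrow> q e \<alpha> = 1) \<and>
     (\<forall>v\<in>V. \<forall>e\<in>E. \<forall>e'\<in>E. v \<in> e \<and> v \<in> e' \<and> e \<noteq> e' \<longrightarrow> gcd (q e v) (q e' v) = 1)"

definition A0 :: "'a set \<Rightarrow> ('a \<Rightarrow> int) \<Rightarrow> 'a set" where
  "A0 A f = {\<alpha> \<in> A. f \<alpha> = 0}"

definition incident :: "'a set set \<Rightarrow> 'a set \<Rightarrow> 'a list \<Rightarrow> bool" where
  "incident E \<epsilon> \<gamma> \<longleftrightarrow> \<epsilon> \<in> E \<and> \<epsilon> \<notin> set (path_edges \<gamma>) \<and> (\<exists>u\<in>set \<gamma>. u \<in> \<epsilon>)"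

definition q_path :: "('a set \<Rightarrow> 'a \<Rightarrow> int) \<Rightarrow> 'a set \<Rightarrow> 'a list \<Rightarrow> int" where
  "q_path q \<epsilon> \<gamma> = q \<epsilon> (SOME u. u \<in> set \<gamma> \<and> u \<in> \<epsilon>)"

definition xhat ::
  "'a set \<Rightarrow> 'a set \<Rightarrow> 'a set set \<Rightarrow> ('a \<Rightarrow> int) \<Rightarrow> ('a set \<Rightarrow> 'a \<Rightarrow> int) \<Rightarrow> 'a \<Rightarrow> 'a \<Rightarrow> int" where
  "xhat V A E f q v \<alpha> =
     f \<alpha> * (\<Prod>\<epsilon>\<in>{\<epsilon>. incident E \<epsilon> (gpath (V \<union> A) E v \<alpha>) \<and> v \<notin> \<epsilon>}.
                q_path q \<epsilon> (gpath (V \<union> A) E v \<alpha>))"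

definition pfun ::
  "'a set \<Rightarrow> 'a set \<Rightarrow> 'a set set \<Rightarrow> ('a \<Rightarrow> int) \<Rightarrow> ('a set \<Rightarrow> 'a \<Rightarrow> int) \<Rightarrow> 'a \<Rightarrow> 'a set \<Rightarrow> int" where
  "pfun V A E f q u e =
     (\<Sum>\<alpha>\<in>{\<alpha> \<in> A - A0 A f. e \<in> set (path_edges (gpath (V \<union> A) E u \<alpha>))}. xhat V A E f q u \<alpha>)"

definition phi_path :: "'a set set \<Rightarrow> ('a set \<Rightarrow> 'a \<Rightarrow> int) \<Rightarrow> 'a list \<Rightarrow> int" where
  "phi_path E q \<gamma> =
     (\<Prod>(u, e)\<in>{(u, e). u \<in> set (tl \<gamma>) \<and> e \<in> E \<and> u \<in> e \<and> e \<notin> set (path_edges \<gamma>)}. q e u)"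

definition phi ::
  "'a set \<Rightarrow> 'a set \<Rightarrow> 'a set set \<Rightarrow> ('a set \<Rightarrow> 'a \<Rightarrow> int) \<Rightarrow> 'a \<Rightarrow> 'a \<Rightarrow> int" where
  "phi V A E q x y = phi_path E q (gpath (V \<union> A) E x y)"

definition Yset ::
  "'a set \<Rightarrow> 'a set \<Rightarrow> 'a set set \<Rightarrow> ('a \<Rightarrow> int) \<Rightarrow> 'a \<Rightarrow> 'a set \<Rightarrow> 'a set" where
  "Yset V A E f x e = {y \<in> V \<union> A0 A f. e \<in> set (path_edges (gpath (V \<union> A) E x y))}"

definition is_root ::
  "'a set \<Rightarrow> 'a set \<Rightarrow> 'a set set \<Rightarrow> ('a set \<Rightarrow> 'a \<Rightarrow> int) \<Rightarrow> 'a \<Rightarrow> bool" where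
  "is_root V A E q v0 \<longleftrightarrow> v0 \<in> V \<and> (\<forall>e\<in>E. v0 \<in> e \<longrightarrow> q e v0 = 1) \<and>
     (\<forall>v\<in>V - {v0}.
        (\<forall>e\<in>E. v \<in> e \<and> e \<notin> set (path_edges (gpath (V \<union> A) E v0 v)) \<longrightarrow> q e v \<ge> 1) \<and>
        card {e\<in>E. v \<in> e \<and> e \<notin> set (path_edges (gpath (V \<union> A) E v0 v)) \<and> q e v \<noteq> 1} \<le> 1)"

definition decorated_rooted_tree ::
  "'a set \<Rightarrow> 'a set \<Rightarrow> 'a set set \<Rightarrow> ('a \<Rightarrow> int) \<Rightarrow> ('a set \<Rightarrow> 'a \<Rightarrow> int) \<Rightarrow> 'a \<Rightarrow> bool" where
  "decorated_rooted_tree V A E f q v0 \<longleftrightarrow> decorated_tree V A E f q \<and> is_root V A E q v0"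

definition tree_less :: "'a set \<Rightarrow> 'a set \<Rightarrow> 'a set set \<Rightarrow> 'a \<Rightarrow> 'a \<Rightarrow> 'a \<Rightarrow> bool" where
  "tree_less V A E v0 x y \<longleftrightarrow> x \<noteq> y \<and> x \<in> set (gpath (V \<union> A) E v0 y)"

definition out_pair :: "'a set \<Rightarrow> 'a set \<Rightarrow> 'a set set \<Rightarrow> 'a \<Rightarrow> 'a \<Rightarrow> 'a set \<Rightarrow> bool" where
  "out_pair V A E v0 x e \<longleftrightarrow> x \<in> V \<union> A \<and> e \<in> E \<and>
     (\<exists>x'. e = {x, x'} \<and> tree_less V A E v0 x x')"

end

theory Submission
  imports Defs
begin

(*
  Induction on the branch behind the out-edge {x, v}, i.e. the cells whose path from x starts
  with that edge. If v is an arrow, both sides equal f(v). If v is a vertex with children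
  c_1, ..., c_k (its neighbours other than x), every path from x into the branch of c_i runs
  through v and picks up the same factor Q_i = prod_{j ~= i} q({v, c_j}, v), both in x-hat and
  in phi. Hence p(x, {x, v}) = sum_i Q_i p(v, {v, c_i}), while the right-hand side splits off
  the term phi(x, v) (delta_v - 2) = (k - 1) prod_j q({v, c_j}, v). The root condition says
  that at most one q({v, c_j}, v) differs from 1, and then sum_i Q_i = 1 + (k - 1) prod_j
  q({v, c_j}, v), which is exactly what makes the two recursions agree.
*)

lemma path_edges_Nil [simp]: "path_edges [] = []"
  by (simp add: path_edges_def)

lemma path_edges_singleton [simp]: "path_edges [a] = []"
  by (simp add: path_edges_def)

lemma path_edges_Cons_Cons [simp]: "path_edges (a # b # xs) = {a, b} # path_edges (b # xs)"
  unfolding path_edges_def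
  by (simp add: upt_conv_Cons map_Suc_upt[symmetric] del: upt_Suc)

lemma path_edges_Cons: "ys \<noteq> [] \<Longrightarrow> path_edges (x # ys) = {x, hd ys} # path_edges ys"
  by (cases ys) auto

lemma path_edges_append:
  "xs \<noteq> [] \<Longrightarrow> ys \<noteq> [] \<Longrightarrow> path_edges (xs @ ys) = path_edges xs @ {last xs, hd ys} # path_edges ys"
  by (induction xs rule: induct_list012) (auto simp: path_edges_Cons)

lemma path_edge_subset: "e \<in> set (path_edges xs) \<Longrightarrow> e \<subseteq> set xs"
  by (induction xs rule: induct_list012) auto

lemma set_path_edges_append_right: "set (path_edges ys) \<subseteq> set (path_edges (xs @ ys))"
  by (cases "xs = [] \<or> ys = []") (auto simp: path_edges_append)

lemma path_edges_infix: "{a, b} \<in> set (path_edges (xs @ a # b # ys))"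
  using set_path_edges_append_right[of "a # b # ys" xs] by auto

lemma is_path_Cons:
  "ys \<noteq> [] \<Longrightarrow> is_path N E (x # ys) \<longleftrightarrow>
     x \<in> N \<and> {x, hd ys} \<in> E \<and> {x, hd ys} \<notin> set (path_edges ys) \<and> is_path N E ys"
  by (auto simp: is_path_def path_edges_Cons)

lemma is_path_singleton: "is_path N E [x] \<longleftrightarrow> x \<in> N"
  by (auto simp: is_path_def)

lemma is_path_appendD:
  "is_path N E (xs @ ys) \<Longrightarrow> xs \<noteq> [] \<Longrightarrow> ys \<noteq> [] \<Longrightarrow> is_path N E xs \<and> is_path N E ys"
  by (auto simp: is_path_def path_edges_append)

lemma is_path_infix: "is_path N E (xs @ ys @ zs) \<Longrightarrow> ys \<noteq> [] \<Longrightarrow> is_path N E ys"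
  by (cases "xs = []"; cases "zs = []") (auto dest: is_path_appendD)

lemma is_path_snoc:
  "is_path N E xs \<Longrightarrow> {last xs, c} \<in> E \<Longrightarrow> c \<notin> set xs \<Longrightarrow> c \<in> N \<Longrightarrow> is_path N E (xs @ [c])"
  by (auto simp: is_path_def path_edges_append dest: path_edge_subset)

lemma sum_prod_Diff_singleton:
  fixes g :: "'a \<Rightarrow> 'b::comm_ring_1"
  assumes C: "finite C" and almost_all_one: "card {c \<in> C. g c \<noteq> 1} \<le> 1"
  shows "(\<Sum>c\<in>C. prod g (C - {c})) = 1 + (of_nat (card C) - 1) * prod g C"
proof (cases "C = {}")
  case False
  obtain c0 where c0: "c0 \<in> C" and others: "\<And>c. c \<in> C \<Longrightarrow> c \<noteq> c0 \<Longrightarrow> g c = 1"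
  proof (cases "{c \<in> C. g c \<noteq> 1} = {}")
    case True
    then show thesis
      using that \<open>C \<noteq> {}\<close> by blast
  next
    case False
    then obtain c0 where "c0 \<in> C" "g c0 \<noteq> 1"
      by blast
    moreover have "\<forall>c1\<in>{c \<in> C. g c \<noteq> 1}. \<forall>c2\<in>{c \<in> C. g c \<noteq> 1}. c1 = c2"
      using almost_all_one C by (simp add: card_le_Suc0_iff_eq)
    ultimately show thesis
      using that by blast
  qed
  have prod_sub: "prod g D = (if c0 \<in> D then g c0 else 1)" if "D \<subseteq> C" for D
  proof -
    have "finite D"
      using C that finite_subset by blast
    have "prod g (D - {c0}) = 1"
      using others that by (intro prod.neutral) blast
    then show ?thesis
      using prod.remove[OF \<open>finite D\<close>, of c0 g] by auto
  qed
  have "(\<Sum>c\<in>C. prod g (C - {c})) = prod g (C - {c0}) + (\<Sum>c\<in>C - {c0}. prod g (C - {c}))"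
    using sum.remove[OF C c0] by blast
  also have "prod g (C - {c0}) = 1"
    using prod_sub[of "C - {c0}"] by simp
  also have "(\<Sum>c\<in>C - {c0}. prod g (C - {c})) = (\<Sum>c\<in>C - {c0}. g c0)"
    using prod_sub c0 by (intro sum.cong) auto
  also have "1 + (\<Sum>c\<in>C - {c0}. g c0) = 1 + of_nat (card C - 1) * g c0"
    using c0 C by simp
  also have "\<dots> = 1 + (of_nat (card C) - 1) * prod g C"
  proof -
    have "1 \<le> card C"
      using c0 C by (auto simp: Suc_le_eq card_gt_0_iff)
    then show ?thesis
      using c0 prod_sub[of C] by (simp add: of_nat_diff)
  qed
  finally show ?thesis .
qed simp

locale tree_graph =
  fixes N :: "'a set" and E :: "'a set set"
  assumes tree: "is_tree N E"
begin

lemma finite_cells: "finite N" and finite_edges: "finite E"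
  and edge_subset_card: "e \<in> E \<Longrightarrow> e \<subseteq> N \<and> card e = 2"
  using tree by (auto simp: is_tree_def is_graph_def)

lemma edge_doubleton: "{a, b} \<in> E \<Longrightarrow> a \<noteq> b \<and> a \<in> N \<and> b \<in> N"
  using edge_subset_card[of "{a, b}"] by (cases "a = b") auto

lemma edge_other_end: "e \<in> E \<Longrightarrow> v \<in> e \<Longrightarrow> \<exists>c. c \<noteq> v \<and> e = {v, c}"
  using edge_subset_card[of e] by (auto simp: card_2_iff)

lemma path_unique:
  assumes "is_path N E xs" "is_path N E ys" "hd xs = hd ys" "last xs = last ys"
  shows "xs = ys"
proof -
  have "hd xs \<in> N" "last xs \<in> N"
    using assms(1) by (auto simp: is_path_def)
  then have "\<exists>!zs. is_path N E zs \<and> hd zs = hd xs \<and> last zs = last xs"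
    using tree by (auto simp: is_tree_def)
  then show ?thesis
    using assms by auto
qed

lemma gpath_spec:
  assumes "x \<in> N" "y \<in> N"
  shows "is_path N E (gpath N E x y)" "hd (gpath N E x y) = x" "last (gpath N E x y) = y"
    and "gpath N E x y \<noteq> []"
proof -
  have "is_path N E (gpath N E x y) \<and> hd (gpath N E x y) = x \<and> last (gpath N E x y) = y"
    unfolding gpath_def by (rule theI') (use tree assms in \<open>auto simp: is_tree_def\<close>)
  then show "is_path N E (gpath N E x y)" "hd (gpath N E x y) = x" "last (gpath N E x y) = y"
    and "gpath N E x y \<noteq> []"
    by (auto simp: is_path_def)
qed

lemma gpath_eqI: "is_path N E xs \<Longrightarrow> hd xs = x \<Longrightarrow> last xs = y \<Longrightarrow> gpath N E x y = xs"
  using gpath_spec path_unique by (metis is_path_def hd_in_set last_in_set subsetD)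

lemma gpath_self: "v \<in> N \<Longrightarrow> gpath N E v v = [v]"
  by (rule gpath_eqI) (simp_all add: is_path_singleton)

lemma gpath_edge: "{x, v} \<in> E \<Longrightarrow> gpath N E x v = [x, v]"
  by (rule gpath_eqI) (auto simp: is_path_def dest: edge_doubleton)

lemma is_path_distinct: "is_path N E xs \<Longrightarrow> distinct xs"
proof (rule ccontr)
  assume "is_path N E xs" "\<not> distinct xs"
  then obtain xs1 u ys xs2 where "xs = xs1 @ [u] @ ys @ [u] @ xs2"
    using not_distinct_decomp by blast
  then have "is_path N E (u # ys @ [u])"
    using is_path_infix[of N E xs1 "u # ys @ [u]" xs2] \<open>is_path N E xs\<close> by simp
  moreover from this have "is_path N E [u]"
    by (auto simp: is_path_def)
  ultimately show False
    using path_unique by fastforce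
qed

lemma path_chord:
  assumes path: "is_path N E xs" and ab: "{a, b} \<in> E" "a \<in> set xs" "b \<in> set xs"
  shows "{a, b} \<in> set (path_edges xs)"
proof -
  have via_infix: "{a, b} \<in> set (path_edges xs)"
    if "xs = xs1 @ a # ys @ b # xs2" "{a, b} \<in> E" for a b xs1 ys xs2
  proof -
    have "is_path N E (a # ys @ [b])"
      using is_path_infix[of N E xs1 "a # ys @ [b]" xs2] path that by simp
    moreover have "is_path N E [a, b]"
      using that(2) by (auto simp: is_path_def dest: edge_doubleton)
    ultimately have "ys = []"
      using path_unique by fastforce
    then show ?thesis
      using that path_edges_infix by simp
  qed
  obtain xs1 xs2 where xs: "xs = xs1 @ a # xs2"
    using ab(2) split_list by metis
  have "a \<noteq> b"
    using ab(1) edge_doubleton by blast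
  then consider "b \<in> set xs2" | "b \<in> set xs1"
    using xs ab(3) by auto
  then show ?thesis
  proof cases
    case 1
    then show ?thesis
      using via_infix xs ab(1) split_list[of b xs2] by auto
  next
    case 2
    then obtain ys1 ys2 where "xs1 = ys1 @ b # ys2"
      using split_list by metis
    then have "{b, a} \<in> set (path_edges xs)"
      using via_infix[of ys1 b ys2 a xs2] xs ab(1) by (simp add: insert_commute)
    then show ?thesis
      by (simp add: insert_commute)
  qed
qed

lemma path_edge_at_last_unique:
  assumes path: "is_path N E xs" and e: "e \<in> set (path_edges xs)" "e' \<in> set (path_edges xs)"
    and last: "last xs \<in> e" "last xs \<in> e'"
  shows "e = e'"
proof -
  obtain ys l where xs: "xs = ys @ [l]"
    using e(1) by (cases xs rule: rev_cases) auto
  have "ys \<noteq> []"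
    using e(1) xs by auto
  have "l \<notin> set ys"
    using is_path_distinct[OF path] xs by simp
  then have "e \<notin> set (path_edges ys)" "e' \<notin> set (path_edges ys)"
    using last xs path_edge_subset by auto
  then show ?thesis
    using e xs \<open>ys \<noteq> []\<close> by (auto simp: path_edges_append)
qed

lemma incident_cell_unique:
  assumes "is_path N E xs" "incident E e xs"
    and "u \<in> set xs" "u \<in> e" "u' \<in> set xs" "u' \<in> e"
  shows "u = u'"
proof (rule ccontr)
  assume "u \<noteq> u'"
  have e: "e \<in> E" "e \<notin> set (path_edges xs)"
    using assms(2) by (auto simp: incident_def)
  then have "e = {u, u'}"
    using edge_other_end assms(4,6) \<open>u \<noteq> u'\<close> by blast
  then show False
    using path_chord[OF assms(1), of u u'] assms e by auto
qed

lemma q_path_eq: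
  "is_path N E xs \<Longrightarrow> incident E e xs \<Longrightarrow> u \<in> set xs \<Longrightarrow> u \<in> e \<Longrightarrow> q_path q e xs = q e u"
  unfolding q_path_def by (metis (mono_tags, lifting) incident_cell_unique someI)

lemma gpath_Cons:
  assumes "{x, v} \<in> E" "y \<in> N" "x \<notin> set (gpath N E v y)"
  shows "gpath N E x y = x # gpath N E v y"
proof (rule gpath_eqI)
  have v: "v \<in> N" "x \<in> N"
    using edge_doubleton assms(1) by auto
  note g = gpath_spec[OF v(1) assms(2)]
  have "{x, v} \<notin> set (path_edges (gpath N E v y))"
    using assms(3) path_edge_subset by blast
  then show "is_path N E (x # gpath N E v y)"
    using g v assms(1) by (simp add: is_path_Cons)
qed (use gpath_spec edge_doubleton assms in auto)

lemma gpath_first_edge: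
  assumes "{x, v} \<in> E" "y \<in> N" "{x, v} \<in> set (path_edges (gpath N E x y))"
  shows "gpath N E x y = x # gpath N E v y" "x \<notin> set (gpath N E v y)"
proof -
  have x: "x \<in> N" "x \<noteq> v"
    using edge_doubleton assms(1) by auto
  note g = gpath_spec[OF x(1) assms(2)]
  obtain b r where r: "gpath N E x y = x # b # r"
    using g(2,4) assms(3) by (cases "gpath N E x y" rule: remdups_adj.cases) auto
  have dist: "distinct (x # b # r)"
    using is_path_distinct g(1) r by metis
  then have "{x, v} \<notin> set (path_edges (b # r))"
    using path_edge_subset by fastforce
  then have "b = v"
    using assms(3) r x(2) by (auto simp: doubleton_eq_iff)
  moreover have "gpath N E b y = b # r"
    using g(1,3) r by (intro gpath_eqI) (auto simp: is_path_Cons)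
  ultimately show "gpath N E x y = x # gpath N E v y" "x \<notin> set (gpath N E v y)"
    using r dist by auto
qed

definition branch :: "'a \<Rightarrow> 'a \<Rightarrow> 'a set" where
  "branch x v = {y \<in> N. {x, v} \<in> set (path_edges (gpath N E x y))}"

definition children :: "'a \<Rightarrow> 'a \<Rightarrow> 'a set" where
  "children x v = {c. {v, c} \<in> E \<and> c \<noteq> x}"

lemma finite_branch: "finite (branch x v)"
  using finite_cells by (rule finite_subset[rotated]) (auto simp: branch_def)

lemma finite_children: "finite (children x v)"
  using finite_cells by (rule finite_subset[rotated]) (auto simp: children_def dest: edge_doubleton)

lemma branch_iff:
  assumes "{x, v} \<in> E"
  shows "y \<in> branch x v \<longleftrightarrow> y \<in> N \<and> x \<notin> set (gpath N E v y)"
proof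
  assume "y \<in> branch x v"
  then show "y \<in> N \<and> x \<notin> set (gpath N E v y)"
    using gpath_first_edge assms by (auto simp: branch_def)
next
  assume y: "y \<in> N \<and> x \<notin> set (gpath N E v y)"
  have v: "v \<in> N"
    using edge_doubleton assms by auto
  then show "y \<in> branch x v"
    using gpath_Cons[OF assms] y gpath_spec[OF v] by (auto simp: branch_def path_edges_Cons)
qed

lemma gpath_branch: "{x, v} \<in> E \<Longrightarrow> y \<in> branch x v \<Longrightarrow> gpath N E x y = x # gpath N E v y"
  using gpath_first_edge by (auto simp: branch_def)

lemma self_in_branch: "{x, v} \<in> E \<Longrightarrow> v \<in> branch x v"
  using branch_iff edge_doubleton gpath_self by fastforce

lemma notin_branch_child: "{v, c} \<in> E \<Longrightarrow> v \<notin> branch v c"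
  using branch_iff edge_doubleton gpath_spec last_in_set by metis

lemma children_not_self: "c \<in> children x v \<Longrightarrow> c \<noteq> v"
  by (auto simp: children_def dest: edge_doubleton)

lemma inj_on_children_edge: "inj_on (\<lambda>c. {v, c}) (children x v)"
  by (auto simp: inj_on_def doubleton_eq_iff dest: children_not_self)

lemma edges_at_eq:
  "{x, v} \<in> E \<Longrightarrow> {e \<in> E. v \<in> e} = insert {x, v} ((\<lambda>c. {v, c}) ` children x v)"
  using edge_other_end by (fastforce simp: children_def insert_commute)

lemma valency_eq_card_children:
  assumes "{x, v} \<in> E"
  shows "valency E v = card (children x v) + 1"
proof -
  have "{x, v} \<notin> (\<lambda>c. {v, c}) ` children x v"
    by (auto simp: children_def doubleton_eq_iff)
  then show ?thesis
    using edges_at_eq[OF assms] finite_children inj_on_children_edge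
    by (simp add: valency_def card_image)
qed

lemma branch_child_subset:
  assumes xv: "{x, v} \<in> E" and c: "c \<in> children x v"
  shows "branch v c \<subseteq> branch x v"
proof
  fix y
  assume "y \<in> branch v c"
  have vc: "{v, c} \<in> E" "c \<noteq> x"
    using c by (auto simp: children_def)
  have y: "y \<in> N" "v \<notin> set (gpath N E c y)"
    using branch_iff vc(1) \<open>y \<in> branch v c\<close> by auto
  have gv: "gpath N E v y = v # gpath N E c y"
    using gpath_branch vc(1) \<open>y \<in> branch v c\<close> by blast
  have "x \<notin> set (gpath N E v y)"
  proof
    assume "x \<in> set (gpath N E v y)"
    moreover have "v \<in> set (gpath N E v y)" "is_path N E (gpath N E v y)"
      using gv gpath_spec[of v y] edge_doubleton[OF vc(1)] y(1) by auto
    ultimately have "{v, x} \<in> set (path_edges (gpath N E v y))"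
      using path_chord xv by (simp add: insert_commute)
    moreover have "{v, x} \<notin> set (path_edges (gpath N E c y))"
      using y(2) path_edge_subset by blast
    ultimately show False
      using gv gpath_spec[of c y] vc y(1) edge_doubleton[OF vc(1)]
      by (auto simp: path_edges_Cons doubleton_eq_iff)
  qed
  then show "y \<in> branch x v"
    using branch_iff xv y(1) by blast
qed

lemma branch_decomp:
  assumes xv: "{x, v} \<in> E"
  shows "branch x v = insert v (\<Union>c\<in>children x v. branch v c)"
proof (intro equalityI subsetI)
  fix y
  assume y: "y \<in> branch x v"
  show "y \<in> insert v (\<Union>c\<in>children x v. branch v c)"
  proof (cases "y = v")
    case False
    have v: "v \<in> N"
      using edge_doubleton xv by auto
    have yN: "y \<in> N" and x: "x \<notin> set (gpath N E v y)"
      using branch_iff xv y by auto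
    note g = gpath_spec[OF v yN]
    obtain c r where r: "gpath N E v y = v # c # r"
      using g(2,3,4) False by (cases "gpath N E v y" rule: remdups_adj.cases) auto
    have "is_path N E (c # r)" "{v, c} \<in> E" "v \<notin> set (c # r)"
      using g(1) is_path_distinct[OF g(1)] r by (auto simp: is_path_Cons)
    moreover have "gpath N E c y = c # r"
      using g(3) r \<open>is_path N E (c # r)\<close> by (intro gpath_eqI) auto
    ultimately have "y \<in> branch v c" "c \<in> children x v"
      using branch_iff[of v c y] yN x r by (auto simp: children_def)
    then show ?thesis
      by blast
  qed (use self_in_branch xv in auto)
next
  fix y
  assume "y \<in> insert v (\<Union>c\<in>children x v. branch v c)"
  then show "y \<in> branch x v"
    using self_in_branch[OF xv] branch_child_subset[OF xv] by auto
qed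

lemma branch_disjoint:
  assumes "{v, c} \<in> E" "{v, c'} \<in> E" "y \<in> branch v c" "y \<in> branch v c'"
  shows "c = c'"
proof -
  have "gpath N E c y = gpath N E c' y"
    using gpath_branch assms by (metis list.inject)
  moreover have "c \<in> N" "c' \<in> N" "y \<in> N"
    using edge_doubleton assms by (auto simp: branch_def)
  ultimately show ?thesis
    using gpath_spec(2) by metis
qed

lemma card_branch_child_less:
  assumes "{x, v} \<in> E" "c \<in> children x v"
  shows "card (branch v c) < card (branch x v)"
proof -
  have "branch v c \<subset> branch x v"
    using branch_child_subset[OF assms] self_in_branch[OF assms(1)] notin_branch_child assms(2)
    by (auto simp: children_def)
  then show ?thesis
    using finite_branch psubset_card_mono by blast
qed

lemma sum_branch_children:
  assumes "{x, v} \<in> E" "v \<notin> X"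
  shows "(\<Sum>y\<in>branch x v \<inter> X. h y) = (\<Sum>c\<in>children x v. \<Sum>y\<in>branch v c \<inter> X. h y)"
proof -
  have "branch x v \<inter> X = (\<Union>c\<in>children x v. branch v c \<inter> X)"
    using branch_decomp[OF assms(1)] assms(2) by auto
  also have "(\<Sum>y\<in>\<dots>. h y) = (\<Sum>c\<in>children x v. \<Sum>y\<in>branch v c \<inter> X. h y)"
    using finite_children finite_branch branch_disjoint
    by (intro sum.UNION_disjoint) (auto simp: children_def)
  finally show ?thesis .
qed

lemma gpath_via_child:
  assumes xv: "{x, v} \<in> E" and c: "c \<in> children x v" and a: "a \<in> branch v c"
  obtains r where "gpath N E c a = c # r" "gpath N E v a = v # c # r"
    "gpath N E x a = x # v # c # r" "distinct (x # v # c # r)"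
proof -
  have vc: "{v, c} \<in> E"
    using c by (simp add: children_def)
  have cN: "c \<in> N" and aN: "a \<in> N"
    using edge_doubleton[OF vc] a by (auto simp: branch_def)
  obtain r where r: "gpath N E c a = c # r"
    using gpath_spec[OF cN aN] by (cases "gpath N E c a") auto
  have "gpath N E x a = x # v # c # r"
    using gpath_branch[OF xv] gpath_branch[OF vc a] branch_child_subset[OF xv c] a r by auto
  moreover have "distinct (x # v # c # r)"
    using is_path_distinct gpath_spec edge_doubleton[OF xv] aN calculation by metis
  ultimately show thesis
    using that r gpath_branch[OF vc a] by simp
qed

lemma edges_at_off_path_via_child:
  assumes xv: "{x, v} \<in> E" and c: "c \<in> children x v" and a: "a \<in> branch v c"
  shows "{e \<in> E. v \<in> e \<and> e \<notin> set (path_edges (gpath N E x a))} = (\<lambda>c'. {v, c'}) ` (children x v - {c})"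
proof -
  obtain r where r: "gpath N E x a = x # v # c # r" and dist: "distinct (x # v # c # r)"
    using gpath_via_child[OF assms] by metis
  have "{v, c'} \<notin> set (path_edges (c # r))" for c'
    using dist path_edge_subset by fastforce
  then have on_path: "{v, c'} \<in> set (path_edges (gpath N E x a)) \<longleftrightarrow> c' = x \<or> c' = c" for c'
    by (auto simp: r doubleton_eq_iff)
  have "{e \<in> E. v \<in> e \<and> e \<notin> set (path_edges (gpath N E x a))} =
      {e \<in> insert {v, x} ((\<lambda>c'. {v, c'}) ` children x v). e \<notin> set (path_edges (gpath N E x a))}"
    using edges_at_eq[OF xv] by (simp add: insert_commute) blast
  also have "\<dots> = (\<lambda>c'. {v, c'}) ` {c' \<in> children x v. \<not> (c' = x \<or> c' = c)}"
    using on_path by blast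
  also have "{c' \<in> children x v. \<not> (c' = x \<or> c' = c)} = children x v - {c}"
    by (auto simp: children_def)
  finally show ?thesis .
qed

definition side_edges :: "'a \<Rightarrow> 'a \<Rightarrow> 'a set set" where
  "side_edges v a = {e. incident E e (gpath N E v a) \<and> v \<notin> e}"

lemma finite_side_edges: "finite (side_edges v a)"
  using finite_edges by (rule finite_subset[rotated]) (auto simp: side_edges_def incident_def)

lemma parent_notin_side_edges_child:
  assumes xv: "{x, v} \<in> E" and c: "c \<in> children x v" and a: "a \<in> branch v c"
    and e: "e \<in> side_edges v a"
  shows "x \<notin> e"
proof
  assume "x \<in> e"
  obtain r where r: "gpath N E v a = v # c # r" "gpath N E x a = x # v # c # r"
    and dist: "distinct (x # v # c # r)"
    using gpath_via_child[OF xv c a] by metis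
  have "x \<in> N" "a \<in> N"
    using edge_doubleton[OF xv] a by (auto simp: branch_def)
  then have path: "is_path N E (x # v # c # r)"
    using r(2) gpath_spec(1) by metis
  have inc: "incident E e (v # c # r)" and "v \<notin> e"
    using e r(1) by (simp_all add: side_edges_def)
  then obtain u where u: "u \<in> set (v # c # r)" "u \<in> e"
    by (auto simp: incident_def)
  have "e \<in> E" "e \<notin> set (path_edges (v # c # r))"
    using inc by (auto simp: incident_def)
  moreover have "e = {x, u}"
    using \<open>x \<in> e\<close> u dist edge_other_end[OF \<open>e \<in> E\<close>] by fastforce
  ultimately show False
    using path_chord[OF path, of x u] \<open>v \<notin> e\<close> u by auto
qed

lemma side_edges_via_child:
  assumes xv: "{x, v} \<in> E" and c: "c \<in> children x v" and a: "a \<in> branch v c"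
  shows "side_edges x a = (\<lambda>c'. {v, c'}) ` (children x v - {c}) \<union> side_edges v a"
proof -
  obtain r where r: "gpath N E v a = v # c # r" "gpath N E x a = x # v # c # r"
    using gpath_via_child[OF assms] by metis
  note at_v = edges_at_off_path_via_child[OF assms]
  have edges: "set (path_edges (x # v # c # r)) = insert {x, v} (set (path_edges (v # c # r)))"
    by simp
  show ?thesis
  proof (intro equalityI subsetI)
    fix e
    assume e: "e \<in> side_edges x a"
    show "e \<in> (\<lambda>c'. {v, c'}) ` (children x v - {c}) \<union> side_edges v a"
    proof (cases "v \<in> e")
      case True
      then show ?thesis
        using e at_v by (auto simp: side_edges_def incident_def)
    next
      case False
      then show ?thesis
        using e r edges by (auto simp: side_edges_def incident_def)
    qed
  next
    fix e
    assume "e \<in> (\<lambda>c'. {v, c'}) ` (children x v - {c}) \<union> side_edges v a"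
    then show "e \<in> side_edges x a"
    proof
      assume e: "e \<in> (\<lambda>c'. {v, c'}) ` (children x v - {c})"
      then obtain c' where "e = {v, c'}" "c' \<noteq> x"
        by (auto simp: children_def)
      moreover have "e \<in> E" "e \<notin> set (path_edges (gpath N E x a))"
        using e at_v by blast+
      ultimately show ?thesis
        using r(2) edge_doubleton[OF xv] by (auto simp: side_edges_def incident_def)
    next
      assume "e \<in> side_edges v a"
      then show ?thesis
        using parent_notin_side_edges_child[OF assms] r edges by (auto simp: side_edges_def incident_def)
    qed
  qed
qed

lemma prod_side_edges_via_child:
  assumes xv: "{x, v} \<in> E" and c: "c \<in> children x v" and a: "a \<in> branch v c"
  shows "(\<Prod>e\<in>side_edges x a. q_path q e (gpath N E x a)) =
    (\<Prod>c'\<in>children x v - {c}. q {v, c'} v) * (\<Prod>e\<in>side_edges v a. q_path q e (gpath N E v a))"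
proof -
  obtain r where r: "gpath N E v a = v # c # r" "gpath N E x a = x # v # c # r"
    using gpath_via_child[OF assms] by metis
  have path: "is_path N E (gpath N E x a)" "is_path N E (gpath N E v a)"
    using gpath_spec edge_doubleton[OF xv] a by (auto simp: branch_def)
  note decomp = side_edges_via_child[OF assms]
  have at_v: "q_path q {v, c'} (gpath N E x a) = q {v, c'} v" if "c' \<in> children x v - {c}" for c'
  proof -
    have "{v, c'} \<in> side_edges x a"
      using decomp that by auto
    then show ?thesis
      using q_path_eq[OF path(1)] r(2) by (simp add: side_edges_def)
  qed
  have beyond_v: "q_path q e (gpath N E x a) = q_path q e (gpath N E v a)" if "e \<in> side_edges v a" for e
  proof -
    have inc_v: "incident E e (gpath N E v a)"
      using that by (simp add: side_edges_def)
    then obtain u where u: "u \<in> set (gpath N E v a)" "u \<in> e"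
      by (auto simp: incident_def)
    have inc_x: "incident E e (gpath N E x a)"
      using that decomp by (auto simp: side_edges_def)
    have "u \<in> set (gpath N E x a)"
      using u(1) r by simp
    then show ?thesis
      using q_path_eq[OF path(1) inc_x _ u(2)] q_path_eq[OF path(2) inc_v u] by simp
  qed
  have "(\<Prod>e\<in>side_edges x a. q_path q e (gpath N E x a)) =
      (\<Prod>e\<in>(\<lambda>c'. {v, c'}) ` (children x v - {c}). q_path q e (gpath N E x a)) *
      (\<Prod>e\<in>side_edges v a. q_path q e (gpath N E x a))"
    unfolding decomp using finite_children finite_side_edges
    by (intro prod.union_disjoint) (auto simp: side_edges_def)
  also have "(\<Prod>e\<in>(\<lambda>c'. {v, c'}) ` (children x v - {c}). q_path q e (gpath N E x a)) =
      (\<Prod>c'\<in>children x v - {c}. q {v, c'} v)"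
    by (subst prod.reindex[OF inj_on_diff[OF inj_on_children_edge]]) (simp add: at_v)
  also have "(\<Prod>e\<in>side_edges v a. q_path q e (gpath N E x a)) =
      (\<Prod>e\<in>side_edges v a. q_path q e (gpath N E v a))"
    by (rule prod.cong) (simp_all add: beyond_v)
  finally show ?thesis .
qed

lemma side_edges_edge:
  assumes "{x, v} \<in> E"
  shows "side_edges x v = (\<lambda>c. {v, c}) ` children x v"
proof -
  have "side_edges x v = {e \<in> E. v \<in> e} - {e. x \<in> e}"
    by (auto simp: side_edges_def incident_def gpath_edge[OF assms])
  also have "\<dots> = (\<lambda>c. {v, c}) ` children x v"
    using edges_at_eq[OF assms] edge_doubleton[OF assms] by (auto simp: children_def)
  finally show ?thesis .
qed

lemma phi_path_via_child:
  assumes xv: "{x, v} \<in> E" and c: "c \<in> children x v" and a: "a \<in> branch v c"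
  shows "phi_path E q (gpath N E x a) =
    (\<Prod>c'\<in>children x v - {c}. q {v, c'} v) * phi_path E q (gpath N E v a)"
proof -
  obtain r where r: "gpath N E v a = v # c # r" "gpath N E x a = x # v # c # r"
    and dist: "distinct (x # v # c # r)"
    using gpath_via_child[OF assms] by metis
  define at_v where "at_v = (\<lambda>c'. {v, c'}) ` (children x v - {c})"
  define Pv where "Pv = {(u, e). u \<in> set (c # r) \<and> e \<in> E \<and> u \<in> e \<and> e \<notin> set (path_edges (v # c # r))}"
  have edges: "set (path_edges (x # v # c # r)) = insert {x, v} (set (path_edges (v # c # r)))"
    by simp
  have at_v_iff: "e \<in> at_v \<longleftrightarrow> e \<in> E \<and> v \<in> e \<and> e \<notin> set (path_edges (x # v # c # r))" for e
    using edges_at_off_path_via_child[OF assms] unfolding at_v_def r(2) by blast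
  have "(u \<in> set (v # c # r) \<and> e \<in> E \<and> u \<in> e \<and> e \<notin> set (path_edges (x # v # c # r))) \<longleftrightarrow>
      (u, e) \<in> Pair v ` at_v \<union> Pv" for u e
  proof (cases "u = v")
    case True
    then show ?thesis
      using at_v_iff dist by (auto simp: Pv_def)
  next
    case False
    have "e \<noteq> {x, v}" if "u \<in> set (c # r)" "u \<in> e"
      using that dist by auto
    then show ?thesis
      using False edges by (auto simp: Pv_def)
  qed
  then have decomp: "{(u, e). u \<in> set (v # c # r) \<and> e \<in> E \<and> u \<in> e \<and> e \<notin> set (path_edges (x # v # c # r))} =
      Pair v ` at_v \<union> Pv"
    by auto
  have "finite Pv"
    by (rule finite_subset[of _ "N \<times> E"]) (auto simp: Pv_def finite_cells finite_edges dest: edge_subset_card)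
  moreover have "Pair v ` at_v \<inter> Pv = {}"
    using dist by (auto simp: Pv_def)
  moreover have "finite at_v"
    using finite_children by (simp add: at_v_def)
  moreover have "(\<Prod>(u, e)\<in>Pair v ` at_v. q e u) = (\<Prod>e\<in>at_v. q e v)"
    by (subst prod.reindex) (auto simp: inj_on_def)
  moreover have "(\<Prod>e\<in>at_v. q e v) = (\<Prod>c'\<in>children x v - {c}. q {v, c'} v)"
    unfolding at_v_def by (rule prod.reindex_cong[OF inj_on_diff[OF inj_on_children_edge] refl refl])
  ultimately have "(\<Prod>(u, e)\<in>Pair v ` at_v \<union> Pv. q e u) =
      (\<Prod>c'\<in>children x v - {c}. q {v, c'} v) * (\<Prod>(u, e)\<in>Pv. q e u)"
    by (simp add: prod.union_disjoint)
  then show ?thesis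
    using r decomp by (simp add: phi_path_def Pv_def)
qed

lemma phi_path_edge:
  assumes "{x, v} \<in> E"
  shows "phi_path E q (gpath N E x v) = (\<Prod>c\<in>children x v. q {v, c} v)"
proof -
  have "{(u, e). u \<in> set (tl [x, v]) \<and> e \<in> E \<and> u \<in> e \<and> e \<notin> set (path_edges [x, v])} =
      (\<lambda>c. (v, {v, c})) ` children x v"
    using edge_other_end by (fastforce simp: children_def insert_commute)
  moreover have "inj_on (\<lambda>c. (v, {v, c})) (children x v)"
    using inj_on_children_edge by (auto simp: inj_on_def)
  ultimately show ?thesis
    by (simp add: phi_path_def gpath_edge[OF assms] prod.reindex)
qed

lemma gpath_edge_at_end_iff:
  assumes "y \<in> N" "{x, v} \<in> E" "x \<in> set (gpath N E y v)" "e \<in> E" "v \<in> e"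
  shows "e \<in> set (path_edges (gpath N E y v)) \<longleftrightarrow> e = {x, v}"
proof -
  have v: "v \<in> N"
    using edge_doubleton assms(2) by blast
  note g = gpath_spec[OF assms(1) v]
  have "{x, v} \<in> set (path_edges (gpath N E y v))"
    using path_chord[OF g(1) assms(2,3)] g(3,4) last_in_set by metis
  then show ?thesis
    using path_edge_at_last_unique[OF g(1)] g(3) assms(5) by auto
qed

lemma gpath_snoc_child:
  assumes y: "y \<in> N" and xv: "{x, v} \<in> E" "x \<in> set (gpath N E y v)" and c: "c \<in> children x v"
  shows "gpath N E y c = gpath N E y v @ [c]"
proof (rule gpath_eqI)
  have vc: "{v, c} \<in> E" "c \<noteq> x" "v \<in> N" "c \<in> N" "c \<noteq> v"
    using c edge_doubleton[of v c] by (auto simp: children_def)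
  note g = gpath_spec[OF y vc(3)]
  have "c \<notin> set (gpath N E y v)"
  proof
    assume "c \<in> set (gpath N E y v)"
    then have "{v, c} \<in> set (path_edges (gpath N E y v))"
      using path_chord[OF g(1) vc(1)] g(3,4) last_in_set by metis
    then show False
      using gpath_edge_at_end_iff[OF y xv vc(1)] vc(2,5) by (auto simp: doubleton_eq_iff)
  qed
  then show "is_path N E (gpath N E y v @ [c])"
    using is_path_snoc[OF g(1)] g(3) vc by simp
qed (use gpath_spec[OF y] edge_doubleton[OF xv(1)] in auto)

end

locale decorated_rooted = tree_graph "V \<union> A" E
  for V A :: "'a set" and E :: "'a set set" +
  fixes f :: "'a \<Rightarrow> int" and q :: "'a set \<Rightarrow> 'a \<Rightarrow> int" and v0 :: 'a
  assumes decorated_rooted: "decorated_rooted_tree V A E f q v0"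
begin

lemma vertices_arrows_disjoint: "V \<inter> A = {}"
  and valency_arrow: "\<alpha> \<in> A \<Longrightarrow> valency E \<alpha> = 1"
  and root_vertex: "v0 \<in> V"
  and root_condition: "v \<in> V - {v0} \<Longrightarrow>
    card {e \<in> E. v \<in> e \<and> e \<notin> set (path_edges (gpath (V \<union> A) E v0 v)) \<and> q e v \<noteq> 1} \<le> 1"
proof -
  have tree: "decorated_tree V A E f q" and root: "is_root V A E q v0"
    using decorated_rooted by (simp_all add: decorated_rooted_tree_def)
  from tree show "V \<inter> A = {}" "\<alpha> \<in> A \<Longrightarrow> valency E \<alpha> = 1"
    by (simp_all add: decorated_tree_def)
  from root show "v0 \<in> V" "v \<in> V - {v0} \<Longrightarrow>
      card {e \<in> E. v \<in> e \<and> e \<notin> set (path_edges (gpath (V \<union> A) E v0 v)) \<and> q e v \<noteq> 1} \<le> 1"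
    by (simp_all add: is_root_def)
qed

lemma pfun_eq_sum_branch:
  "pfun V A E f q x {x, v} = (\<Sum>a\<in>branch x v \<inter> (A - A0 A f). xhat V A E f q x a)"
proof -
  have "{a \<in> A - A0 A f. {x, v} \<in> set (path_edges (gpath (V \<union> A) E x a))} = branch x v \<inter> (A - A0 A f)"
    unfolding branch_def by blast
  then show ?thesis
    by (simp add: pfun_def)
qed

lemma Yset_eq_branch: "Yset V A E f x {x, v} = branch x v \<inter> (V \<union> A0 A f)"
  unfolding Yset_def branch_def A0_def by blast

lemma xhat_via_child:
  "{x, v} \<in> E \<Longrightarrow> c \<in> children x v \<Longrightarrow> a \<in> branch v c \<Longrightarrow>
    xhat V A E f q x a = (\<Prod>c'\<in>children x v - {c}. q {v, c'} v) * xhat V A E f q v a"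
  using prod_side_edges_via_child[of x v c a q] by (simp add: xhat_def side_edges_def)

lemma phi_via_child:
  "{x, v} \<in> E \<Longrightarrow> c \<in> children x v \<Longrightarrow> a \<in> branch v c \<Longrightarrow>
    phi V A E q x a = (\<Prod>c'\<in>children x v - {c}. q {v, c'} v) * phi V A E q v a"
  using phi_path_via_child[of x v c a q] by (simp add: phi_def)

lemma pfun_vertex:
  assumes xv: "{x, v} \<in> E" and v: "v \<in> V"
  shows "pfun V A E f q x {x, v} =
    (\<Sum>c\<in>children x v. (\<Prod>c'\<in>children x v - {c}. q {v, c'} v) * pfun V A E f q v {v, c})"
proof -
  have "v \<notin> A - A0 A f"
    using v vertices_arrows_disjoint by auto
  then have "pfun V A E f q x {x, v} =
      (\<Sum>c\<in>children x v. \<Sum>a\<in>branch v c \<inter> (A - A0 A f). xhat V A E f q x a)"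
    by (simp add: pfun_eq_sum_branch sum_branch_children[OF xv])
  also have "\<dots> = (\<Sum>c\<in>children x v. (\<Prod>c'\<in>children x v - {c}. q {v, c'} v) * pfun V A E f q v {v, c})"
  proof (rule sum.cong[OF refl])
    fix c
    assume c: "c \<in> children x v"
    have "(\<Sum>a\<in>branch v c \<inter> (A - A0 A f). xhat V A E f q x a) =
        (\<Sum>a\<in>branch v c \<inter> (A - A0 A f). (\<Prod>c'\<in>children x v - {c}. q {v, c'} v) * xhat V A E f q v a)"
      by (rule sum.cong[OF refl]) (simp add: xhat_via_child[OF xv c])
    then show "(\<Sum>a\<in>branch v c \<inter> (A - A0 A f). xhat V A E f q x a) =
        (\<Prod>c'\<in>children x v - {c}. q {v, c'} v) * pfun V A E f q v {v, c}"
      by (simp add: pfun_eq_sum_branch sum_distrib_left)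
  qed
  finally show ?thesis .
qed

lemma sum_Yset_vertex:
  assumes xv: "{x, v} \<in> E" and v: "v \<in> V"
  shows "(\<Sum>y\<in>Yset V A E f x {x, v}. phi V A E q x y * h y) =
    (\<Prod>c\<in>children x v. q {v, c} v) * h v +
    (\<Sum>c\<in>children x v. (\<Prod>c'\<in>children x v - {c}. q {v, c'} v) *
      (\<Sum>y\<in>Yset V A E f v {v, c}. phi V A E q v y * h y))"
proof -
  define Y where "Y = V \<union> A0 A f"
  have "branch x v \<inter> Y = insert v (branch x v \<inter> (Y - {v}))"
    using self_in_branch[OF xv] v by (auto simp: Y_def)
  then have "(\<Sum>y\<in>Yset V A E f x {x, v}. phi V A E q x y * h y) =
      phi V A E q x v * h v + (\<Sum>y\<in>branch x v \<inter> (Y - {v}). phi V A E q x y * h y)"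
    using finite_branch by (simp add: Yset_eq_branch Y_def[symmetric])
  also have "phi V A E q x v = (\<Prod>c\<in>children x v. q {v, c} v)"
    using phi_path_edge[OF xv] by (simp add: phi_def)
  also have "(\<Sum>y\<in>branch x v \<inter> (Y - {v}). phi V A E q x y * h y) =
      (\<Sum>c\<in>children x v. \<Sum>y\<in>branch v c \<inter> (Y - {v}). phi V A E q x y * h y)"
    by (simp add: sum_branch_children[OF xv])
  also have "\<dots> = (\<Sum>c\<in>children x v. (\<Prod>c'\<in>children x v - {c}. q {v, c'} v) *
      (\<Sum>y\<in>Yset V A E f v {v, c}. phi V A E q v y * h y))"
  proof (rule sum.cong[OF refl])
    fix c
    assume c: "c \<in> children x v"
    have "branch v c \<inter> (Y - {v}) = Yset V A E f v {v, c}"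
      using notin_branch_child c by (auto simp: children_def Yset_eq_branch Y_def)
    moreover have "phi V A E q x y * h y = (\<Prod>c'\<in>children x v - {c}. q {v, c'} v) * (phi V A E q v y * h y)"
      if "y \<in> Yset V A E f v {v, c}" for y
      using that phi_via_child[OF xv c] by (simp add: Yset_eq_branch)
    ultimately have "(\<Sum>y\<in>branch v c \<inter> (Y - {v}). phi V A E q x y * h y) =
        (\<Sum>y\<in>Yset V A E f v {v, c}. (\<Prod>c'\<in>children x v - {c}. q {v, c'} v) * (phi V A E q v y * h y))"
      by (auto intro: sum.cong)
    then show "(\<Sum>y\<in>branch v c \<inter> (Y - {v}). phi V A E q x y * h y) =
        (\<Prod>c'\<in>children x v - {c}. q {v, c'} v) * (\<Sum>y\<in>Yset V A E f v {v, c}. phi V A E q v y * h y)"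
      by (simp add: sum_distrib_left)
  qed
  finally show ?thesis .
qed

lemma card_children_weight_ne_1_le_1:
  assumes xv: "{x, v} \<in> E" and on_path: "x \<in> set (gpath (V \<union> A) E v0 v)" and v: "v \<in> V"
  shows "card {c \<in> children x v. q {v, c} v \<noteq> 1} \<le> 1"
proof -
  have v0: "v0 \<in> V \<union> A"
    using root_vertex by blast
  have "v \<noteq> v0"
    using on_path gpath_self[OF v0] edge_doubleton[OF xv] by auto
  have "{e \<in> E. v \<in> e \<and> e \<notin> set (path_edges (gpath (V \<union> A) E v0 v)) \<and> q e v \<noteq> 1} =
      {e \<in> {e \<in> E. v \<in> e}. e \<noteq> {x, v} \<and> q e v \<noteq> 1}"
    using gpath_edge_at_end_iff[OF v0 xv on_path] by blast
  also have "\<dots> = {e \<in> (\<lambda>c. {v, c}) ` children x v. q e v \<noteq> 1}"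
    unfolding edges_at_eq[OF xv] by (auto simp: children_def doubleton_eq_iff)
  also have "\<dots> = (\<lambda>c. {v, c}) ` {c \<in> children x v. q {v, c} v \<noteq> 1}"
    by blast
  finally have "card {e \<in> E. v \<in> e \<and> e \<notin> set (path_edges (gpath (V \<union> A) E v0 v)) \<and> q e v \<noteq> 1} =
      card ((\<lambda>c. {v, c}) ` {c \<in> children x v. q {v, c} v \<noteq> 1})"
    by simp
  also have "\<dots> = card {c \<in> children x v. q {v, c} v \<noteq> 1}"
    by (rule card_image, rule inj_on_subset[OF inj_on_children_edge]) blast
  finally show ?thesis
    using root_condition[of v] v \<open>v \<noteq> v0\<close> by simp
qed

lemma pfun_arrow:
  assumes xv: "{x, v} \<in> E" and v: "v \<in> A" "f v \<in> {0, 1}"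
  shows "pfun V A E f q x {x, v} = 1 + (\<Sum>y\<in>Yset V A E f x {x, v}. phi V A E q x y * (int (valency E y) - 2))"
proof -
  have "children x v = {}"
    using valency_eq_card_children[OF xv] valency_arrow[OF v(1)] finite_children by simp
  then have branch: "branch x v = {v}" and side: "side_edges x v = {}" and phi: "phi V A E q x v = 1"
    using branch_decomp[OF xv] side_edges_edge[OF xv] phi_path_edge[OF xv, of q]
    by (simp_all add: phi_def)
  have "v \<notin> V"
    using v(1) vertices_arrows_disjoint by blast
  from v(2) consider "f v = 0" | "f v = 1"
    by blast
  then show ?thesis
  proof cases
    case 1
    then show ?thesis
      using branch phi v valency_arrow[OF v(1)] by (simp add: pfun_eq_sum_branch Yset_eq_branch A0_def)
  next
    case 2
    moreover have "xhat V A E f q x v = f v * (\<Prod>e\<in>side_edges x v. q_path q e (gpath (V \<union> A) E x v))"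
      by (simp add: xhat_def side_edges_def)
    ultimately show ?thesis
      using branch side v \<open>v \<notin> V\<close> by (simp add: pfun_eq_sum_branch Yset_eq_branch A0_def)
  qed
qed

lemma pfun_out_edge:
  assumes f01: "\<forall>\<alpha>\<in>A. f \<alpha> \<in> {0, 1}"
    and "{x, v} \<in> E" "x \<in> set (gpath (V \<union> A) E v0 v)"
  shows "pfun V A E f q x {x, v} = 1 + (\<Sum>y\<in>Yset V A E f x {x, v}. phi V A E q x y * (int (valency E y) - 2))"
  using assms(2,3)
proof (induction "card (branch x v)" arbitrary: x v rule: less_induct)
  case less
  note xv = less.prems(1)
  show ?case
  proof (cases "v \<in> A")
    case True
    then show ?thesis
      using pfun_arrow[OF xv] f01 by blast
  next
    case False
    then have v: "v \<in> V"
      using edge_doubleton[OF xv] by blast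
    define Q where "Q c = (\<Prod>c'\<in>children x v - {c}. q {v, c'} v)" for c
    define P where "P = (\<Prod>c\<in>children x v. q {v, c} v)"
    define R where "R u e = (\<Sum>y\<in>Yset V A E f u e. phi V A E q u y * (int (valency E y) - 2))" for u e
    have IH: "pfun V A E f q v {v, c} = 1 + R v {v, c}" if c: "c \<in> children x v" for c
      unfolding R_def
    proof (rule less.hyps[OF card_branch_child_less[OF xv c]])
      show "{v, c} \<in> E"
        using c by (simp add: children_def)
      show "v \<in> set (gpath (V \<union> A) E v0 c)"
        using gpath_snoc_child[OF _ xv less.prems(2) c] gpath_spec[of v0 v] root_vertex
          edge_doubleton[OF xv] last_in_set by fastforce
    qed
    have "(\<Sum>c\<in>children x v. Q c) = 1 + (int (card (children x v)) - 1) * P"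
      unfolding Q_def P_def
      by (rule sum_prod_Diff_singleton[OF finite_children card_children_weight_ne_1_le_1[OF xv less.prems(2) v]])
    then have sum_Q: "(\<Sum>c\<in>children x v. Q c) = 1 + P * (int (valency E v) - 2)"
      using valency_eq_card_children[OF xv] by simp
    have "pfun V A E f q x {x, v} = (\<Sum>c\<in>children x v. Q c * (1 + R v {v, c}))"
      unfolding pfun_vertex[OF xv v] Q_def by (intro sum.cong) (simp_all add: IH)
    also have "\<dots> = (\<Sum>c\<in>children x v. Q c) + (\<Sum>c\<in>children x v. Q c * R v {v, c})"
      by (simp add: distrib_left sum.distrib)
    also have "\<dots> = 1 + R x {x, v}"
      using sum_Q sum_Yset_vertex[OF xv v] unfolding Q_def P_def R_def by simp
    finally show ?thesis
      by (simp add: R_def)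
  qed
qed

end

theorem lemma6p3:
  fixes V A :: "'a set" and E :: "'a set set" and f :: "'a \<Rightarrow> int"
    and q :: "'a set \<Rightarrow> 'a \<Rightarrow> int" and v0 :: 'a
  assumes "decorated_rooted_tree V A E f q v0"
    and "\<forall>\<alpha>\<in>A. f \<alpha> \<in> {0, 1}"
    and "out_pair V A E v0 x e"
  shows "pfun V A E f q x e =
    1 + (\<Sum>y\<in>Yset V A E f x e. phi V A E q x y * (int (valency E y) - 2))"
proof -
  interpret decorated_rooted V A E f q v0
    using assms(1) by unfold_locales (simp_all add: decorated_rooted_tree_def decorated_tree_def)
  obtain v where "e = {x, v}" "e \<in> E" "x \<in> set (gpath (V \<union> A) E v0 v)"
    using assms(3) by (auto simp: out_pair_def tree_less_def)
  then show ?thesis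
    using pfun_out_edge[OF assms(2)] by simp
qed

end
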